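(* $\mathscr X$ is a compact subset of $C[0,1]$ with respect to the topology of uniform convergence.
   Context: The Faber--Schauder functions are $e_{0,0}(t):=(\min\{t,1-t\})^+$ and $e_{m,k}(t):=2^{-m/2}e_{0,0}(2^m t-k)$ for $t\in\mathbb R$, $m\ge1$, $k\in\mathbb Z$. $\mathscr X$ denotes the set of all functions $x\in C[0,1]$ of the form $x=\sum_{m=0}^\infty\sum_{k=0}^{2^m-1}\theta_{m,k}e_{m,k}$ (uniformly convergent series) with $\theta_{m,k}\in\{-1,+1\}$. *)

theory Defs
  imports "HOL-Analysis.Analysis"
begin

definition e00 :: "real \<Rightarrow> real" where
  "e00 t = max (min t (1 - t)) 0"

definition fs :: "nat \<Rightarrow> int \<Rightarrow> real \<Rightarrow> real" where
  "fs m k t = 2 powr (- real m / 2) * e00 (2 ^ m * t - real_of_int k)"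

text \<open>The space C[0,1] with the uniform (sup) metric: continuous functions on
  [0,1], represented extensionally (undefined outside [0,1]).\<close>
definition C01 :: "(real \<Rightarrow> real) metric" where
  "C01 = cfunspace (top_of_set {0..1}) euclidean_metric"

definition scrX :: "(real \<Rightarrow> real) set" where
  "scrX = {x. x \<in> extensional {0..1} \<and> continuous_on {0..1} x \<and>
     (\<exists>\<theta> :: nat \<Rightarrow> int \<Rightarrow> real.
        (\<forall>m k. 0 \<le> k \<and> k < 2 ^ m \<longrightarrow> \<theta> m k \<in> {-1, 1}) \<and>
        uniform_limit {0..1}
          (\<lambda>n t. \<Sum>m<n. \<Sum>k\<in>{0..<2 ^ m}. \<theta> m k * fs m k t) x sequentially)}"

end

theory Submission imports Defs begin

text \<open>On each level m the functions e_{m,k} have disjoint supports and height 2^{-m/2}/2, so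
  for coefficients bounded by 1 the level sums are bounded by a geometric sequence. Hence
  the coefficient-to-function map is well defined on the cube of sign sequences, and two
  sign sequences agreeing on the first N levels give functions at uniform distance
  O(2^{-N/2}). So the map is continuous on the compact product space {-1, 1}^(nat \<times> int),
  and script-X is its image.\<close>

lemma norm_suminf_diff_le_tail:
  fixes a b :: "nat \<Rightarrow> 'a::banach" and M :: "nat \<Rightarrow> real"
  assumes M: "summable M"
    and a: "\<And>m. norm (a m) \<le> M m" and b: "\<And>m. norm (b m) \<le> M m"
    and agree: "\<And>m. m < N \<Longrightarrow> a m = b m"
  shows "norm (suminf a - suminf b) \<le> 2 * (\<Sum>m. M (m + N))"
proof -
  define d where "d m = a m - b m" for m
  have d_le: "norm (d m) \<le> 2 * M m" for m
    using norm_triangle_ineq4[of "a m" "b m"] a[of m] b[of m] by (simp add: d_def)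
  have M2: "summable (\<lambda>m. 2 * M m)"
    using M by (rule summable_mult)
  have "summable a" "summable b"
    using summable_comparison_test'[OF M a] summable_comparison_test'[OF M b] by blast+
  then have "suminf a - suminf b = suminf d"
    unfolding d_def by (simp add: suminf_diff)
  also have "\<dots> = (\<Sum>m. d (m + N))"
  proof -
    have "summable d"
      using summable_comparison_test'[OF M2 d_le] .
    moreover have "(\<Sum>i<N. d i) = 0"
      by (simp add: d_def agree)
    ultimately show ?thesis
      using suminf_split_initial_segment[of d N] by simp
  qed
  also have "norm \<dots> \<le> (\<Sum>m. 2 * M (m + N))"
    using M2 d_le by (intro norm_suminf_le) (auto simp: summable_iff_shift[of "\<lambda>m. 2 * M m"])
  also have "\<dots> = 2 * (\<Sum>m. M (m + N))"
    using M by (intro suminf_mult) simp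
  finally show ?thesis .
qed

lemma e00_nonneg: "0 \<le> e00 s"
  by (simp add: e00_def)

lemma e00_le_half: "e00 s \<le> 1 / 2"
  by (simp add: e00_def max_def min_def)

lemma e00_eq_0: "s \<notin> {0<..<1} \<Longrightarrow> e00 s = 0"
  by (auto simp: e00_def max_def min_def)

lemma two_powr_neg_half: "2 powr (- real m / 2) = inverse (sqrt 2) ^ m"
proof -
  have "2 powr (real m / 2) = (2 powr (1/2)) powr real m"
    by (simp add: powr_powr)
  also have "\<dots> = sqrt 2 ^ m"
    by (simp add: powr_half_sqrt powr_realpow)
  finally show ?thesis
    by (simp add: powr_minus power_inverse)
qed

lemma inverse_sqrt2_less_1: "inverse (sqrt 2) < 1"
  by (simp add: inverse_less_1_iff)

lemma fs_nonneg: "0 \<le> fs m k t"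
  by (simp add: fs_def e00_nonneg)

lemma fs_le: "fs m k t \<le> inverse (sqrt 2) ^ m / 2"
  unfolding fs_def two_powr_neg_half
  using e00_le_half[of "2 ^ m * t - real_of_int k"] by (simp add: mult_left_mono)

lemma fs_eq_0:
  assumes "k \<noteq> \<lfloor>2 ^ m * t\<rfloor>"
  shows "fs m k t = 0"
proof -
  have "2 ^ m * t - real_of_int k \<notin> {0<..<1}"
    using assms floor_eq_iff[of "2 ^ m * t" k] by auto
  then show ?thesis
    by (simp add: fs_def e00_eq_0)
qed

lemma abs_sum_fs_le:
  assumes "\<And>k. \<bar>c k\<bar> \<le> 1"
  shows "\<bar>\<Sum>k\<in>A. c k * fs m k t\<bar> \<le> inverse (sqrt 2) ^ m / 2"
proof -
  define k0 where "k0 = \<lfloor>2 ^ m * t\<rfloor>"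
  have "(\<Sum>k\<in>A. c k * fs m k t) = (\<Sum>k\<in>A. if k = k0 then c k0 * fs m k0 t else 0)"
    by (rule sum.cong) (auto simp: fs_eq_0 k0_def)
  also have "\<dots> = (if finite A \<and> k0 \<in> A then c k0 * fs m k0 t else 0)"
    by (cases "finite A") simp_all
  finally have "\<bar>\<Sum>k\<in>A. c k * fs m k t\<bar> \<le> \<bar>c k0\<bar> * fs m k0 t"
    using fs_nonneg[of m k0 t] by (simp add: abs_mult)
  also have "\<dots> \<le> inverse (sqrt 2) ^ m / 2"
    using mult_mono[OF assms fs_le[of m k0 t]] fs_nonneg by simp
  finally show ?thesis .
qed

text \<open>Coefficients are indexed by pairs (m, k), so that the sign sequences form the product
  space {-1, 1}^(nat \<times> int); coefficients with k outside [0, 2^m) are ignored.\<close>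

definition fs_level :: "(nat \<times> int \<Rightarrow> real) \<Rightarrow> nat \<Rightarrow> real \<Rightarrow> real" where
  "fs_level \<theta> m t = (\<Sum>k\<in>{0..<2 ^ m}. \<theta> (m, k) * fs m k t)"

definition fs_series :: "(nat \<times> int \<Rightarrow> real) \<Rightarrow> real \<Rightarrow> real" where
  "fs_series \<theta> = restrict (\<lambda>t. \<Sum>m. fs_level \<theta> m t) {0..1}"

definition sign_coeffs :: "(nat \<times> int \<Rightarrow> real) set" where
  "sign_coeffs = UNIV \<rightarrow>\<^sub>E {-1, 1}"

lemma mem_sign_coeffs: "\<theta> \<in> sign_coeffs \<longleftrightarrow> (\<forall>i. \<theta> i \<in> {-1, 1})"
  by (simp add: sign_coeffs_def PiE_UNIV_domain Pi_iff)

lemma sign_coeffsD: "\<theta> \<in> sign_coeffs \<Longrightarrow> \<theta> i \<in> {-1, 1}"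
  unfolding sign_coeffs_def using PiE_mem[of \<theta> UNIV "\<lambda>_. {-1, 1}" i] by blast

lemma abs_le_1_if_sign_coeffs: "\<theta> \<in> sign_coeffs \<Longrightarrow> \<bar>\<theta> i\<bar> \<le> 1"
  using sign_coeffsD[of \<theta> i] by auto

lemma abs_fs_level_le: "(\<And>i. \<bar>\<theta> i\<bar> \<le> 1) \<Longrightarrow> \<bar>fs_level \<theta> m t\<bar> \<le> inverse (sqrt 2) ^ m / 2"
  unfolding fs_level_def by (rule abs_sum_fs_le)

lemma summable_fs_level_bound: "summable (\<lambda>m. inverse (sqrt 2) ^ m / 2)"
  using inverse_sqrt2_less_1 by (intro summable_divide summable_geometric) simp

lemma uniform_limit_fs_series:
  assumes "\<And>i. \<bar>\<theta> i\<bar> \<le> 1"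
  shows "uniform_limit {0..1} (\<lambda>n t. \<Sum>m<n. fs_level \<theta> m t) (fs_series \<theta>) sequentially"
proof -
  have "uniform_limit {0..1} (\<lambda>n t. \<Sum>m<n. fs_level \<theta> m t) (\<lambda>t. \<Sum>m. fs_level \<theta> m t) sequentially"
    using abs_fs_level_le[OF assms] by (intro Weierstrass_m_test[OF _ summable_fs_level_bound]) simp
  then show ?thesis
    by (rule uniform_limit_cong[THEN iffD1, rotated 2]) (simp_all add: fs_series_def)
qed

lemma continuous_on_fs_series: "(\<And>i. \<bar>\<theta> i\<bar> \<le> 1) \<Longrightarrow> continuous_on {0..1} (fs_series \<theta>)"
  by (rule uniform_limit_theorem[OF _ uniform_limit_fs_series])
    (auto intro!: always_eventually continuous_intros simp: fs_level_def fs_def e00_def)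

lemma fs_series_in_C01:
  assumes "\<And>i. \<bar>\<theta> i\<bar> \<le> 1"
  shows "fs_series \<theta> \<in> mspace C01"
proof -
  have "continuous_on {0..1} (fs_series \<theta>)"
    using continuous_on_fs_series[OF assms] .
  moreover from this have "bounded (fs_series \<theta> ` {0..1})"
    by (intro compact_imp_bounded compact_continuous_image) auto
  ultimately show ?thesis
    by (simp add: C01_def fs_series_def)
qed

lemma abs_fs_series_diff_le:
  assumes "\<And>i. \<bar>\<theta> i\<bar> \<le> 1" "\<And>i. \<bar>\<eta> i\<bar> \<le> 1"
    and agree: "\<And>m k. m < N \<Longrightarrow> 0 \<le> k \<Longrightarrow> k < 2 ^ m \<Longrightarrow> \<theta> (m, k) = \<eta> (m, k)"
    and t: "t \<in> {0..1}"
  shows "\<bar>fs_series \<theta> t - fs_series \<eta> t\<bar> \<le> inverse (sqrt 2) ^ N / (1 - inverse (sqrt 2))"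
proof -
  let ?q = "inverse (sqrt 2)"
  have "\<bar>fs_series \<theta> t - fs_series \<eta> t\<bar> = norm ((\<Sum>m. fs_level \<theta> m t) - (\<Sum>m. fs_level \<eta> m t))"
    using t by (simp add: fs_series_def)
  also have "\<dots> \<le> 2 * (\<Sum>m. ?q ^ (m + N) / 2)"
    using abs_fs_level_le[of \<theta>, OF assms(1)] abs_fs_level_le[of \<eta>, OF assms(2)]
    by (intro norm_suminf_diff_le_tail[OF summable_fs_level_bound])
      (auto simp: fs_level_def agree intro!: sum.cong)
  also have "\<dots> = ?q ^ N / (1 - ?q)"
    using inverse_sqrt2_less_1
    by (simp add: power_add mult.commute[of _ "?q ^ N"] suminf_mult suminf_divide suminf_geometric)
      (simp add: field_simps)
  finally show ?thesis .
qed

lemma mdist_fs_series_le: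
  assumes "\<And>i. \<bar>\<theta> i\<bar> \<le> 1" "\<And>i. \<bar>\<eta> i\<bar> \<le> 1"
    and "\<And>m k. m < N \<Longrightarrow> 0 \<le> k \<Longrightarrow> k < 2 ^ m \<Longrightarrow> \<theta> (m, k) = \<eta> (m, k)"
  shows "mdist C01 (fs_series \<theta>) (fs_series \<eta>) \<le> inverse (sqrt 2) ^ N / (1 - inverse (sqrt 2))"
  unfolding C01_def using inverse_sqrt2_less_1
  by (intro mdist_cfunspace_le) (auto simp: dist_real_def assms intro!: abs_fs_series_diff_le)

lemma finite_levels_below: "finite {(m, k::int). m < N \<and> 0 \<le> k \<and> k < 2 ^ m}"
proof (rule finite_subset)
  have "k < 2 ^ N" if "m < N" "k < (2::int) ^ m" for m k
    using that power_increasing[of m N "2::int"] by (meson less_imp_le less_le_trans one_le_numeral)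
  then show "{(m, k::int). m < N \<and> 0 \<le> k \<and> k < 2 ^ m} \<subseteq> {..<N} \<times> {0..<2 ^ N}"
    by auto
qed simp

lemma compactin_sign_coeffs: "compactin (product_topology (\<lambda>_. euclideanreal) UNIV) sign_coeffs"
  unfolding sign_coeffs_def compactin_PiE by (auto intro: finite_imp_compactin)

lemma openin_sign_coeffs_cylinder:
  assumes "\<theta> \<in> sign_coeffs" "finite P"
  shows "openin (subtopology (product_topology (\<lambda>_. euclideanreal) UNIV) sign_coeffs)
           {\<eta> \<in> sign_coeffs. \<forall>i\<in>P. \<eta> i = \<theta> i}"
proof -
  define B where "B = (\<Pi>\<^sub>E i\<in>UNIV. if i \<in> P then ball (\<theta> i) 1 else UNIV)"
  have "\<eta> i = \<theta> i" if "\<eta> \<in> sign_coeffs \<inter> B" "i \<in> P" for \<eta> i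
  proof -
    have "\<eta> \<in> B" "\<eta> \<in> sign_coeffs"
      using that(1) by simp_all
    have "\<eta> i \<in> ball (\<theta> i) 1"
      using PiE_mem[OF \<open>\<eta> \<in> B\<close>[unfolded B_def] UNIV_I, of i] that(2) by simp
    moreover have "\<eta> i \<in> {-1, 1}" "\<theta> i \<in> {-1, 1}"
      using sign_coeffsD[OF \<open>\<eta> \<in> sign_coeffs\<close>] sign_coeffsD[OF assms(1)] by blast+
    ultimately show ?thesis
      by (auto simp: dist_real_def)
  qed
  then have "{\<eta> \<in> sign_coeffs. \<forall>i\<in>P. \<eta> i = \<theta> i} = sign_coeffs \<inter> B"
    unfolding B_def by (auto simp: PiE_UNIV_domain)
  moreover have "openin (product_topology (\<lambda>_. euclideanreal) UNIV) B"
    unfolding B_def openin_PiE_gen using assms(2) by (auto elim!: finite_subset[rotated])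
  ultimately show ?thesis
    by (simp add: openin_subtopology_Int2)
qed

lemma continuous_map_fs_series:
  "continuous_map (subtopology (product_topology (\<lambda>_. euclideanreal) UNIV) sign_coeffs)
     (mtopology_of C01) fs_series"
  unfolding mtopology_of_def Metric_space.continuous_map_to_metric[OF Metric_space_mspace_mdist]
proof (intro ballI allI impI)
  fix \<theta> and \<epsilon> :: real
  assume "\<theta> \<in> topspace (subtopology (product_topology (\<lambda>_. euclideanreal) UNIV) sign_coeffs)"
    and \<epsilon>: "0 < \<epsilon>"
  then have \<theta>: "\<theta> \<in> sign_coeffs" by simp
  let ?q = "inverse (sqrt 2)"
  obtain N where N: "?q ^ N < \<epsilon> * (1 - ?q)"
    using real_arch_pow_inv[of "\<epsilon> * (1 - ?q)" ?q] \<epsilon> inverse_sqrt2_less_1 by auto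
  define U where "U = {\<eta> \<in> sign_coeffs. \<forall>i\<in>{(m, k::int). m < N \<and> 0 \<le> k \<and> k < 2 ^ m}. \<eta> i = \<theta> i}"
  have "openin (subtopology (product_topology (\<lambda>_. euclideanreal) UNIV) sign_coeffs) U"
    unfolding U_def using \<theta> finite_levels_below by (rule openin_sign_coeffs_cylinder)
  moreover have "\<theta> \<in> U"
    using \<theta> by (simp add: U_def)
  moreover have "fs_series \<eta> \<in> Metric_space.mball (mspace C01) (mdist C01) (fs_series \<theta>) \<epsilon>"
    if \<eta>: "\<eta> \<in> U" for \<eta>
  proof -
    have "mdist C01 (fs_series \<theta>) (fs_series \<eta>) \<le> ?q ^ N / (1 - ?q)"
      using \<eta> by (intro mdist_fs_series_le) (auto simp: U_def abs_le_1_if_sign_coeffs[OF \<theta>] abs_le_1_if_sign_coeffs)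
    also have "\<dots> < \<epsilon>"
      using N inverse_sqrt2_less_1 by (simp add: divide_less_eq)
    finally show ?thesis
      using \<eta> \<theta> fs_series_in_C01 abs_le_1_if_sign_coeffs
      by (simp add: U_def Metric_space.in_mball[OF Metric_space_mspace_mdist])
  qed
  ultimately show "\<exists>U. openin (subtopology (product_topology (\<lambda>_. euclideanreal) UNIV) sign_coeffs) U \<and>
      \<theta> \<in> U \<and> (\<forall>\<eta>\<in>U. fs_series \<eta> \<in> Metric_space.mball (mspace C01) (mdist C01) (fs_series \<theta>) \<epsilon>)"
    by blast
qed

lemma scrX_eq_image_sign_coeffs: "scrX = fs_series ` sign_coeffs"
proof
  show "fs_series ` sign_coeffs \<subseteq> scrX"
  proof
    fix x assume "x \<in> fs_series ` sign_coeffs"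
    then obtain \<theta> where \<theta>: "\<theta> \<in> sign_coeffs" and x: "x = fs_series \<theta>" by blast
    have "uniform_limit {0..1}
        (\<lambda>n t. \<Sum>m<n. \<Sum>k\<in>{0..<2 ^ m}. \<theta> (m, k) * fs m k t) x sequentially"
      using uniform_limit_fs_series[OF abs_le_1_if_sign_coeffs[OF \<theta>]] by (simp add: x fs_level_def)
    moreover have "\<theta> (m, k) \<in> {-1, 1}" for m k
      using \<theta> by (rule sign_coeffsD)
    ultimately show "x \<in> scrX"
      unfolding scrX_def
      using continuous_on_fs_series[OF abs_le_1_if_sign_coeffs[OF \<theta>]]
      by (auto simp: x fs_series_def intro!: exI[of _ "\<lambda>m k. \<theta> (m, k)"])
  qed
next
  show "scrX \<subseteq> fs_series ` sign_coeffs"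
  proof
    fix x assume "x \<in> scrX"
    then obtain \<theta> :: "nat \<Rightarrow> int \<Rightarrow> real" where
      ext: "x \<in> extensional {0..1}" and
      signs: "\<And>m k. 0 \<le> k \<Longrightarrow> k < 2 ^ m \<Longrightarrow> \<theta> m k \<in> {-1, 1}" and
      lim: "uniform_limit {0..1} (\<lambda>n t. \<Sum>m<n. \<Sum>k\<in>{0..<2 ^ m}. \<theta> m k * fs m k t) x sequentially"
      unfolding scrX_def by blast
    define \<phi> where "\<phi> = (\<lambda>(m, k). if 0 \<le> k \<and> k < 2 ^ m then \<theta> m k else 1)"
    have \<phi>: "\<phi> \<in> sign_coeffs"
      using signs by (auto simp: mem_sign_coeffs \<phi>_def)
    have "(\<Sum>k\<in>{0..<2 ^ m}. \<theta> m k * fs m k t) = fs_level \<phi> m t" for m t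
      unfolding fs_level_def by (rule sum.cong) (simp_all add: \<phi>_def)
    then have lim\<phi>: "uniform_limit {0..1} (\<lambda>n t. \<Sum>m<n. fs_level \<phi> m t) x sequentially"
      using lim by simp
    have "x = fs_series \<phi>"
    proof (rule extensionalityI[OF ext])
      show "fs_series \<phi> \<in> extensional {0..1}"
        by (simp add: fs_series_def)
      fix t :: real assume t: "t \<in> {0..1}"
      show "x t = fs_series \<phi> t"
        using tendsto_uniform_limitI[OF lim\<phi> t]
          tendsto_uniform_limitI[OF uniform_limit_fs_series[OF abs_le_1_if_sign_coeffs[OF \<phi>]] t]
        by (rule LIMSEQ_unique)
    qed
    then show "x \<in> fs_series ` sign_coeffs"
      using \<phi> by blast
  qed
qed

theorem corollary2p5:
  shows "compactin (mtopology_of C01) scrX"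
proof -
  have "compactin (subtopology (product_topology (\<lambda>_. euclideanreal) UNIV) sign_coeffs) sign_coeffs"
    using compactin_sign_coeffs by (simp add: compactin_subtopology)
  from image_compactin[OF this continuous_map_fs_series] show ?thesis
    by (simp add: scrX_eq_image_sign_coeffs)
qed

end
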